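(* Let $(M,F)$ be a Finsler manifold and let $\gamma=\gamma(s)$ be a curve parametrized by arc-length $s$ (so $F(\dot\gamma)=1$, $\dot\gamma=d\gamma/ds$) satisfying $$D^*_{\dot\gamma}D^*_{\dot\gamma}\dot\gamma+\tau(s)\dot\gamma=0,$$ where $\tau$ is a smooth function along $\gamma$. Then $\tau=g_{\dot\gamma}(D^*_{\dot\gamma}\dot\gamma,D^*_{\dot\gamma}\dot\gamma)$.
   Context: Coordinates $(x^i,y^i)$ on $TM$; $g_{ij}=\frac12\partial_{y^i}\partial_{y^j}(F^2)$ (inverse $g^{ij}$), $C_{ijk}=\frac12\partial_{y^k}g_{ij}$, $C^i_{jk}=g^{ir}C_{rjk}$, $G^i=\frac14g^{il}\{[F^2]_{x^ky^l}y^k-[F^2]_{x^l}\}$, $G^i_j=\partial_{y^j}G^i$, $\delta_i=\partial_{x^i}-G^r_i\partial_{y^r}$, ${}^*\Gamma^k_{ij}=\frac12g^{kl}(\delta_ig_{jl}+\delta_jg_{il}-\delta_lg_{ij})$. For a curve $\gamma$ and a vector field $W=W^k\partial_{x^k}$ along it, the Cartan $Y$-connection derivative ($Y$ any extension of $\dot\gamma$) is $(D^*_{\dot\gamma}W)^k=\frac{dW^k}{ds}+W^i\big[{}^*\Gamma^k_{ij}\dot\gamma^j+C^k_{ir}(\ddot\gamma^r+2G^r)\big]$, coefficients evaluated at $(\gamma,\dot\gamma)$; $g_{\dot\gamma}(U,W)=g_{ij}(\gamma,\dot\gamma)U^iW^j$. *)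

theory Defs
  imports "HOL-Analysis.Analysis"
begin

definition pdir :: "'a::euclidean_space \<Rightarrow> ('a \<Rightarrow> real) \<Rightarrow> 'a \<Rightarrow> real" where
  "pdir b f z = deriv (\<lambda>t. f (z + t *\<^sub>R b)) 0"

definition smooth_on :: "'a::euclidean_space set \<Rightarrow> ('a \<Rightarrow> real) \<Rightarrow> bool" where
  "smooth_on S f \<longleftrightarrow> open S \<and>
     (\<forall>bs. set bs \<subseteq> Basis \<longrightarrow>
        continuous_on S (foldr pdir bs f) \<and>
        (\<forall>z\<in>S. \<forall>b\<in>Basis. (\<lambda>t. foldr pdir bs f (z + t *\<^sub>R b)) differentiable (at 0)))"

definition vd :: "(real \<Rightarrow> 'a::real_normed_vector) \<Rightarrow> real \<Rightarrow> 'a" where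
  "vd f s = vector_derivative f (at s)"

definition smooth_curve :: "real set \<Rightarrow> (real \<Rightarrow> 'a::real_normed_vector) \<Rightarrow> bool" where
  "smooth_curve I c \<longleftrightarrow> open I \<and> (\<forall>k. \<forall>s\<in>I. (vd ^^ k) c differentiable (at s))"

section \<open>Coordinate calculus on TM (coordinates (x,y))\<close>

type_synonym 'n fin = "real^'n \<Rightarrow> real^'n \<Rightarrow> real"

definition dX :: "'n::finite \<Rightarrow> 'n fin \<Rightarrow> 'n fin" where
  "dX i f x y = deriv (\<lambda>t. f (x + t *\<^sub>R axis i 1) y) 0"

definition dY :: "'n::finite \<Rightarrow> 'n fin \<Rightarrow> 'n fin" where
  "dY i f x y = deriv (\<lambda>t. f x (y + t *\<^sub>R axis i 1)) 0"

definition Fsq :: "'n fin \<Rightarrow> 'n fin" where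
  "Fsq F x y = (F x y)\<^sup>2"

definition gF :: "'n fin \<Rightarrow> 'n::finite \<Rightarrow> 'n \<Rightarrow> 'n fin" where
  "gF F i j = (\<lambda>x y. 1/2 * dY i (dY j (Fsq F)) x y)"

definition gmat :: "'n fin \<Rightarrow> real^'n \<Rightarrow> real^'n \<Rightarrow> real^'n^'n::finite" where
  "gmat F x y = (\<chi> i j. gF F i j x y)"

definition ginv :: "'n fin \<Rightarrow> 'n::finite \<Rightarrow> 'n \<Rightarrow> 'n fin" where
  "ginv F i j x y = matrix_inv (gmat F x y) $ i $ j"

definition Clow :: "'n fin \<Rightarrow> 'n::finite \<Rightarrow> 'n \<Rightarrow> 'n \<Rightarrow> 'n fin" where
  "Clow F i j k = (\<lambda>x y. 1/2 * dY k (gF F i j) x y)"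

definition Cup :: "'n fin \<Rightarrow> 'n::finite \<Rightarrow> 'n \<Rightarrow> 'n \<Rightarrow> 'n fin" where
  "Cup F i j k = (\<lambda>x y. \<Sum>r\<in>UNIV. ginv F i r x y * Clow F r j k x y)"

definition Gs :: "'n fin \<Rightarrow> 'n::finite \<Rightarrow> 'n fin" where
  "Gs F i = (\<lambda>x y. 1/4 * (\<Sum>l\<in>UNIV. ginv F i l x y *
      ((\<Sum>k\<in>UNIV. dY l (dX k (Fsq F)) x y * y $ k) - dX l (Fsq F) x y)))"

definition Gn :: "'n fin \<Rightarrow> 'n::finite \<Rightarrow> 'n \<Rightarrow> 'n fin" where
  "Gn F i j = dY j (Gs F i)"

definition delta :: "'n fin \<Rightarrow> 'n::finite \<Rightarrow> 'n fin \<Rightarrow> 'n fin" where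
  "delta F i h = (\<lambda>x y. dX i h x y - (\<Sum>r\<in>UNIV. Gn F r i x y * dY r h x y))"

definition Gam :: "'n fin \<Rightarrow> 'n::finite \<Rightarrow> 'n \<Rightarrow> 'n \<Rightarrow> 'n fin" where
  "Gam F k i j = (\<lambda>x y. 1/2 * (\<Sum>l\<in>UNIV. ginv F k l x y *
      (delta F i (gF F j l) x y + delta F j (gF F i l) x y - delta F l (gF F i j) x y)))"

text \<open>Cartan Y-connection derivative of W along the curve c, Y an extension of c'.\<close>
definition covD :: "'n fin \<Rightarrow> (real \<Rightarrow> real^'n::finite) \<Rightarrow> (real \<Rightarrow> real^'n) \<Rightarrow> real \<Rightarrow> real^'n" where
  "covD F c W s = (\<chi> k. vd (\<lambda>t. W t $ k) s +
     (\<Sum>i\<in>UNIV. W s $ i *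
        ((\<Sum>j\<in>UNIV. Gam F k i j (c s) (vd c s) * vd c s $ j) +
         (\<Sum>r\<in>UNIV. Cup F k i r (c s) (vd c s) *
              (vd (vd c) s $ r + 2 * Gs F r (c s) (vd c s))))))"

definition gform :: "'n fin \<Rightarrow> real^'n \<Rightarrow> real^'n \<Rightarrow> real^'n \<Rightarrow> real^'n::finite \<Rightarrow> real" where
  "gform F x y U W = (\<Sum>i\<in>UNIV. \<Sum>j\<in>UNIV. gF F i j x y * U $ i * W $ j)"

section \<open>Finsler structure on a coordinate domain U of R^n\<close>

definition finsler_chart :: "(real^'n::finite) set \<Rightarrow> 'n fin \<Rightarrow> bool" where
  "finsler_chart U F \<longleftrightarrow> open U \<and>
     (\<forall>x\<in>U. \<forall>y. F x y \<ge> 0) \<and>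
     smooth_on (U \<times> (UNIV - {0})) (\<lambda>z. F (fst z) (snd z)) \<and>
     (\<forall>x\<in>U. \<forall>y. \<forall>c>0. F x (c *\<^sub>R y) = c * F x y) \<and>
     (\<forall>x\<in>U. \<forall>y. y \<noteq> 0 \<longrightarrow>
        (\<forall>v. v \<noteq> 0 \<longrightarrow> (\<Sum>i\<in>UNIV. \<Sum>j\<in>UNIV. gF F i j x y * v $ i * v $ j) > 0))"

end

theory Submission
  imports Defs
begin

(* Along a curve gamma the Cartan connection is compatible with the fundamental tensor in the
   direction of the reference vector:  d/ds g_gamma'(W, gamma') = g_gamma'(D W, gamma') +
   g_gamma'(W, D gamma').  The Christoffel-type terms cancel because the lowered coefficients
   are symmetric up to delta-derivatives of g, and all terms carrying the Cartan tensor vanish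
   because C contracted with the reference vector is zero (Euler's theorem for the 2-homogeneous
   F^2).  As g_gamma'(gamma', gamma') = F(gamma')^2 = 1, one differentiation gives
   g(D gamma', gamma') = 0 and a second gives g(D D gamma', gamma') + g(D gamma', D gamma') = 0;
   substituting D D gamma' = -tau gamma' yields tau = g(D gamma', D gamma'). *)

section \<open>Calculus of smooth functions\<close>

lemma eventually_in_open_on_line:
  fixes z b :: "'a::real_normed_vector"
  assumes "open S" "z \<in> S"
  shows "\<forall>\<^sub>F t in nhds (0::real). z + t *\<^sub>R b \<in> S"
proof -
  have "open ((\<lambda>t::real. z + t *\<^sub>R b) -` S)"
    by (rule continuous_open_vimage[OF assms(1)]) (intro continuous_intros)
  moreover have "0 \<in> (\<lambda>t::real. z + t *\<^sub>R b) -` S" using assms by simp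
  ultimately show ?thesis
    using eventually_nhds_in_open by fastforce
qed

lemma pdir_cong_open:
  assumes "open S" "z \<in> S" "\<forall>w\<in>S. f w = g w"
  shows "pdir b f z = pdir b g z"
  unfolding pdir_def
  by (rule deriv_cong_ev[OF eventually_mono[OF eventually_in_open_on_line[OF assms(1,2)]]])
    (use assms(3) in auto)

lemma foldr_pdir_cong_open:
  assumes "open S" "\<forall>w\<in>S. f w = g w"
  shows "\<forall>w\<in>S. foldr pdir bs f w = foldr pdir bs g w"
  by (induction bs) (use assms pdir_cong_open in auto)

lemma real_differentiable_cong_ev:
  assumes "(\<phi>::real \<Rightarrow> real) differentiable at x" "\<forall>\<^sub>F t in nhds x. \<phi> t = \<psi> t"
  shows "\<psi> differentiable at x"
proof -
  obtain D where "(\<phi> has_real_derivative D) (at x)"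
    using assms(1) real_differentiable_def by blast
  then have "(\<psi> has_real_derivative D) (at x)"
    using DERIV_cong_ev[OF refl assms(2) refl] by simp
  then show ?thesis using real_differentiable_def by blast
qed

lemma has_real_derivative_pdir:
  "(\<lambda>t. f (z + t *\<^sub>R b)) differentiable at 0 \<Longrightarrow>
   ((\<lambda>t. f (z + t *\<^sub>R b)) has_real_derivative pdir b f z) (at 0)"
  unfolding pdir_def by (simp add: DERIV_deriv_iff_real_differentiable)

lemma pdir_eqI:
  "((\<lambda>t. f (z + t *\<^sub>R b)) has_real_derivative D) (at 0) \<Longrightarrow> pdir b f z = D"
  unfolding pdir_def by (rule DERIV_imp_deriv)

text \<open>\<open>smooth_on\<close> restricted to derivatives of order at most \<open>n\<close>, so that its closure
  properties can be proved by induction on \<open>n\<close>.\<close>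
definition smooth_upto :: "'a::euclidean_space set \<Rightarrow> nat \<Rightarrow> ('a \<Rightarrow> real) \<Rightarrow> bool" where
  "smooth_upto S n f \<longleftrightarrow> (\<forall>bs. set bs \<subseteq> Basis \<and> length bs \<le> n \<longrightarrow>
        continuous_on S (foldr pdir bs f) \<and>
        (\<forall>z\<in>S. \<forall>b\<in>Basis. (\<lambda>t. foldr pdir bs f (z + t *\<^sub>R b)) differentiable (at 0)))"

lemma smooth_on_iff_smooth_upto: "smooth_on S f \<longleftrightarrow> open S \<and> (\<forall>n. smooth_upto S n f)"
proof -
  have "(\<forall>bs. set bs \<subseteq> Basis \<longrightarrow> P bs) \<longleftrightarrow> (\<forall>n bs. set bs \<subseteq> Basis \<and> length bs \<le> n \<longrightarrow> P bs)"
    for P :: "'a list \<Rightarrow> bool"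
    by auto
  then show ?thesis unfolding smooth_on_def smooth_upto_def by presburger
qed

lemma smooth_upto_0_iff:
  "smooth_upto S 0 f \<longleftrightarrow> continuous_on S f \<and>
     (\<forall>z\<in>S. \<forall>b\<in>Basis. (\<lambda>t. f (z + t *\<^sub>R b)) differentiable (at 0))"
  unfolding smooth_upto_def by simp

lemma smooth_upto_Suc_iff:
  "smooth_upto S (Suc n) f \<longleftrightarrow> smooth_upto S 0 f \<and> (\<forall>b\<in>Basis. smooth_upto S n (pdir b f))"
proof
  assume A: "smooth_upto S (Suc n) f"
  show "smooth_upto S 0 f \<and> (\<forall>b\<in>Basis. smooth_upto S n (pdir b f))"
  proof (intro conjI ballI)
    show "smooth_upto S 0 f"
      using A[unfolded smooth_upto_def, rule_format, of "[]"] unfolding smooth_upto_0_iff by simp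
    fix b :: 'a assume b: "b \<in> Basis"
    show "smooth_upto S n (pdir b f)"
      unfolding smooth_upto_def
    proof (intro allI impI)
      fix bs :: "'a list" assume "set bs \<subseteq> Basis \<and> length bs \<le> n"
      then have "set (bs @ [b]) \<subseteq> Basis \<and> length (bs @ [b]) \<le> Suc n" using b by auto
      from A[unfolded smooth_upto_def, rule_format, OF this]
      show "continuous_on S (foldr pdir bs (pdir b f)) \<and>
        (\<forall>z\<in>S. \<forall>c\<in>Basis. (\<lambda>t. foldr pdir bs (pdir b f) (z + t *\<^sub>R c)) differentiable (at 0))"
        by simp
    qed
  qed
next
  assume A: "smooth_upto S 0 f \<and> (\<forall>b\<in>Basis. smooth_upto S n (pdir b f))"
  show "smooth_upto S (Suc n) f"
    unfolding smooth_upto_def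
  proof (intro allI impI)
    fix bs :: "'a list" assume bs: "set bs \<subseteq> Basis \<and> length bs \<le> Suc n"
    show "continuous_on S (foldr pdir bs f) \<and>
        (\<forall>z\<in>S. \<forall>b\<in>Basis. (\<lambda>t. foldr pdir bs f (z + t *\<^sub>R b)) differentiable (at 0))"
    proof (cases bs rule: rev_exhaust)
      case Nil then show ?thesis using A unfolding smooth_upto_0_iff by simp
    next
      case (snoc cs c)
      then have "set cs \<subseteq> Basis \<and> length cs \<le> n" "smooth_upto S n (pdir c f)"
        using A bs by auto
      then show ?thesis unfolding snoc smooth_upto_def by simp
    qed
  qed
qed

lemma smooth_upto_le:
  assumes "smooth_upto S n f" "m \<le> n"
  shows "smooth_upto S m f"
  unfolding smooth_upto_def
proof (intro allI impI)
  fix bs :: "'a list" assume "set bs \<subseteq> Basis \<and> length bs \<le> m"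
  with assms show "continuous_on S (foldr pdir bs f) \<and>
      (\<forall>z\<in>S. \<forall>b\<in>Basis. (\<lambda>t. foldr pdir bs f (z + t *\<^sub>R b)) differentiable (at 0))"
    unfolding smooth_upto_def by simp
qed

lemma smooth_upto_cong_open:
  assumes "open S" "\<forall>w\<in>S. f w = g w" "smooth_upto S n f"
  shows "smooth_upto S n g"
  unfolding smooth_upto_def
proof (intro allI impI conjI ballI)
  fix bs :: "'a list" assume bs: "set bs \<subseteq> Basis \<and> length bs \<le> n"
  have eq: "\<forall>w\<in>S. foldr pdir bs f w = foldr pdir bs g w"
    using foldr_pdir_cong_open[OF assms(1,2)] .
  have cd: "continuous_on S (foldr pdir bs f)"
    "\<forall>z\<in>S. \<forall>b\<in>Basis. (\<lambda>t. foldr pdir bs f (z + t *\<^sub>R b)) differentiable (at 0)"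
    using assms(3) bs unfolding smooth_upto_def by auto
  show "continuous_on S (foldr pdir bs g)"
    using continuous_on_cong[OF refl, of S "foldr pdir bs f" "foldr pdir bs g"] eq cd(1) by simp
  fix z b :: 'a assume z: "z \<in> S" and b: "b \<in> Basis"
  have "\<forall>\<^sub>F t in nhds 0. foldr pdir bs f (z + t *\<^sub>R b) = foldr pdir bs g (z + t *\<^sub>R b)"
    by (rule eventually_mono[OF eventually_in_open_on_line[OF assms(1) z, of b]]) (use eq in simp)
  then show "(\<lambda>t. foldr pdir bs g (z + t *\<^sub>R b)) differentiable (at 0)"
    by (rule real_differentiable_cong_ev[rotated]) (use cd(2) z b in simp)
qed

lemma smooth_upto_const: "smooth_upto S n (\<lambda>w. c)"
proof (induction n arbitrary: c)
  case 0
  then show ?case unfolding smooth_upto_0_iff by simp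
next
  case (Suc n)
  have "pdir b (\<lambda>w. c) = (\<lambda>w. 0)" for b :: 'a
    by (rule ext, rule pdir_eqI) simp
  then show ?case unfolding smooth_upto_Suc_iff using Suc.IH[of 0] by (simp add: smooth_upto_0_iff)
qed

lemma smooth_upto_add:
  assumes "open S"
  shows "smooth_upto S n f \<Longrightarrow> smooth_upto S n g \<Longrightarrow> smooth_upto S n (\<lambda>w. f w + g w)"
proof (induction n arbitrary: f g)
  case 0
  then show ?case unfolding smooth_upto_0_iff by (auto intro: continuous_on_add differentiable_add)
next
  case (Suc n)
  have f0: "smooth_upto S 0 f" and g0: "smooth_upto S 0 g"
    using Suc.prems smooth_upto_le by blast+
  show ?case unfolding smooth_upto_Suc_iff
  proof (intro conjI ballI)
    show "smooth_upto S 0 (\<lambda>w. f w + g w)"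
      using f0 g0 unfolding smooth_upto_0_iff by (auto intro: continuous_on_add differentiable_add)
    fix b :: 'a assume b: "b \<in> Basis"
    have eq: "\<forall>w\<in>S. pdir b f w + pdir b g w = pdir b (\<lambda>w. f w + g w) w"
    proof
      fix w assume w: "w \<in> S"
      have "(\<lambda>t. f (w + t *\<^sub>R b)) differentiable at 0" "(\<lambda>t. g (w + t *\<^sub>R b)) differentiable at 0"
        using f0 g0 w b unfolding smooth_upto_0_iff by auto
      from DERIV_add[OF this[THEN has_real_derivative_pdir]]
      show "pdir b f w + pdir b g w = pdir b (\<lambda>w. f w + g w) w"
        by (rule pdir_eqI[symmetric])
    qed
    have "smooth_upto S n (pdir b f)" "smooth_upto S n (pdir b g)"
      using Suc.prems b unfolding smooth_upto_Suc_iff by auto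
    from smooth_upto_cong_open[OF assms eq Suc.IH[OF this]]
    show "smooth_upto S n (pdir b (\<lambda>w. f w + g w))" .
  qed
qed

lemma smooth_upto_mult:
  assumes "open S"
  shows "smooth_upto S n f \<Longrightarrow> smooth_upto S n g \<Longrightarrow> smooth_upto S n (\<lambda>w. f w * g w)"
proof (induction n arbitrary: f g)
  case 0
  then show ?case unfolding smooth_upto_0_iff by (auto intro: continuous_on_mult differentiable_mult)
next
  case (Suc n)
  have f0: "smooth_upto S 0 f" and g0: "smooth_upto S 0 g"
    and fn: "smooth_upto S n f" and gn: "smooth_upto S n g"
    using Suc.prems smooth_upto_le by (meson le0 le_SucI order_refl)+
  show ?case unfolding smooth_upto_Suc_iff
  proof (intro conjI ballI)
    show "smooth_upto S 0 (\<lambda>w. f w * g w)"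
      using smooth_upto_le[OF Suc.IH[OF fn gn]] by simp
    fix b :: 'a assume b: "b \<in> Basis"
    have fb: "smooth_upto S n (pdir b f)" and gb: "smooth_upto S n (pdir b g)"
      using Suc.prems b unfolding smooth_upto_Suc_iff by auto
    have eq: "\<forall>w\<in>S. pdir b f w * g w + f w * pdir b g w = pdir b (\<lambda>w. f w * g w) w"
    proof (intro ballI sym[OF pdir_eqI])
      fix w assume w: "w \<in> S"
      have "(\<lambda>t. f (w + t *\<^sub>R b)) differentiable at 0" "(\<lambda>t. g (w + t *\<^sub>R b)) differentiable at 0"
        using f0 g0 w b unfolding smooth_upto_0_iff by auto
      from DERIV_mult'[OF this[THEN has_real_derivative_pdir]]
      show "((\<lambda>t. f (w + t *\<^sub>R b) * g (w + t *\<^sub>R b)) has_real_derivative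
          pdir b f w * g w + f w * pdir b g w) (at 0)"
        by (simp add: algebra_simps)
    qed
    have "smooth_upto S n (\<lambda>w. pdir b f w * g w + f w * pdir b g w)"
      by (rule smooth_upto_add[OF assms Suc.IH[OF fb gn] Suc.IH[OF fn gb]])
    from smooth_upto_cong_open[OF assms eq this]
    show "smooth_upto S n (pdir b (\<lambda>w. f w * g w))" .
  qed
qed

lemma smooth_upto_inverse:
  assumes "open S"
  shows "smooth_upto S n f \<Longrightarrow> \<forall>w\<in>S. f w \<noteq> 0 \<Longrightarrow> smooth_upto S n (\<lambda>w. inverse (f w))"
proof (induction n arbitrary: f)
  case 0
  then show ?case unfolding smooth_upto_0_iff
  proof (intro conjI ballI)
    show "continuous_on S (\<lambda>w. inverse (f w))"
      using 0 unfolding smooth_upto_0_iff by (auto intro: continuous_on_inverse)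
    fix z b assume z: "z \<in> S" and b: "(b::'a) \<in> Basis"
    have "(\<lambda>t. f (z + t *\<^sub>R b)) differentiable at 0" using 0 z b unfolding smooth_upto_0_iff by simp
    then show "(\<lambda>t. inverse (f (z + t *\<^sub>R b))) differentiable at 0"
      using DERIV_inverse_fun[OF has_real_derivative_pdir] 0(2) z real_differentiable_def by fastforce
  qed
next
  case (Suc n)
  have f0: "smooth_upto S 0 f" and fn: "smooth_upto S n f"
    using Suc.prems smooth_upto_le by (meson le0 le_SucI order_refl)+
  have i: "smooth_upto S n (\<lambda>w. inverse (f w))" using Suc.IH[OF fn Suc.prems(2)] .
  show ?case unfolding smooth_upto_Suc_iff
  proof (intro conjI ballI)
    show "smooth_upto S 0 (\<lambda>w. inverse (f w))" using smooth_upto_le[OF i] by simp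
    fix b :: 'a assume b: "b \<in> Basis"
    have fb: "smooth_upto S n (pdir b f)" using Suc.prems b unfolding smooth_upto_Suc_iff by auto
    have eq: "\<forall>w\<in>S. (-1) * pdir b f w * (inverse (f w) * inverse (f w)) = pdir b (\<lambda>w. inverse (f w)) w"
    proof (intro ballI sym[OF pdir_eqI])
      fix w assume w: "w \<in> S"
      have "(\<lambda>t. f (w + t *\<^sub>R b)) differentiable at 0"
        using f0 w b unfolding smooth_upto_0_iff by simp
      from DERIV_inverse_fun[OF has_real_derivative_pdir[OF this]]
      show "((\<lambda>t. inverse (f (w + t *\<^sub>R b))) has_real_derivative
          (-1) * pdir b f w * (inverse (f w) * inverse (f w))) (at 0)"
        using Suc.prems(2) w by (simp add: power2_eq_square)
    qed
    have "smooth_upto S n (\<lambda>w. (-1) * pdir b f w * (inverse (f w) * inverse (f w)))"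
      by (intro smooth_upto_mult[OF assms] smooth_upto_const fb i)
    from smooth_upto_cong_open[OF assms eq this]
    show "smooth_upto S n (pdir b (\<lambda>w. inverse (f w)))" .
  qed
qed

lemma smooth_upto_inner: "smooth_upto S n (\<lambda>w. w \<bullet> c)"
proof -
  have line: "((\<lambda>t. (z + t *\<^sub>R b) \<bullet> c) has_real_derivative b \<bullet> c) (at t0)" for z b :: 'a and t0
    by (auto intro!: derivative_eq_intros simp: inner_add_left)
  have c0: "smooth_upto S 0 (\<lambda>w. w \<bullet> c)"
    unfolding smooth_upto_0_iff using line real_differentiable_def
    by (auto intro: continuous_intros)
  moreover have "pdir b (\<lambda>w. w \<bullet> c) = (\<lambda>w. b \<bullet> c)" for b :: 'a
    by (rule ext, rule pdir_eqI, rule line)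
  ultimately show ?thesis
    by (cases n) (simp_all only: smooth_upto_Suc_iff smooth_upto_const ball_simps, simp)
qed

lemma smooth_on_open: "smooth_on S f \<Longrightarrow> open S"
  unfolding smooth_on_def by simp

lemma smooth_on_add: "smooth_on S f \<Longrightarrow> smooth_on S g \<Longrightarrow> smooth_on S (\<lambda>w. f w + g w)"
  unfolding smooth_on_iff_smooth_upto using smooth_upto_add by blast

lemma smooth_on_mult: "smooth_on S f \<Longrightarrow> smooth_on S g \<Longrightarrow> smooth_on S (\<lambda>w. f w * g w)"
  unfolding smooth_on_iff_smooth_upto using smooth_upto_mult by blast

lemma smooth_on_const: "open S \<Longrightarrow> smooth_on S (\<lambda>w. c)"
  unfolding smooth_on_iff_smooth_upto using smooth_upto_const by blast

lemma smooth_on_inner: "open S \<Longrightarrow> smooth_on S (\<lambda>w. w \<bullet> c)"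
  unfolding smooth_on_iff_smooth_upto using smooth_upto_inner by blast

lemma smooth_on_inverse:
  "smooth_on S f \<Longrightarrow> \<forall>w\<in>S. f w \<noteq> 0 \<Longrightarrow> smooth_on S (\<lambda>w. inverse (f w))"
  unfolding smooth_on_iff_smooth_upto using smooth_upto_inverse by blast

lemma smooth_on_cong_open: "smooth_on S f \<Longrightarrow> \<forall>w\<in>S. f w = g w \<Longrightarrow> smooth_on S g"
  unfolding smooth_on_iff_smooth_upto using smooth_upto_cong_open by blast

lemma smooth_on_pdir: "smooth_on S f \<Longrightarrow> b \<in> Basis \<Longrightarrow> smooth_on S (pdir b f)"
  unfolding smooth_on_iff_smooth_upto using smooth_upto_Suc_iff by blast

lemma smooth_on_cmult: "smooth_on S f \<Longrightarrow> smooth_on S (\<lambda>w. c * f w)"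
  using smooth_on_mult[OF smooth_on_const[OF smooth_on_open]] by blast

lemma smooth_on_diff: "smooth_on S f \<Longrightarrow> smooth_on S g \<Longrightarrow> smooth_on S (\<lambda>w. f w - g w)"
  using smooth_on_add[OF _ smooth_on_cmult[of S g "-1"]] by simp

lemma smooth_on_divide:
  "smooth_on S f \<Longrightarrow> smooth_on S g \<Longrightarrow> \<forall>w\<in>S. g w \<noteq> 0 \<Longrightarrow> smooth_on S (\<lambda>w. f w / g w)"
  using smooth_on_mult[OF _ smooth_on_inverse] by (simp add: divide_inverse)

lemma smooth_on_sum:
  assumes "finite A" "open S" "\<And>i. i \<in> A \<Longrightarrow> smooth_on S (f i)"
  shows "smooth_on S (\<lambda>w. \<Sum>i\<in>A. f i w)"
  using assms by (induction A rule: finite_induct) (auto intro: smooth_on_add smooth_on_const)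

lemma smooth_on_prod:
  assumes "finite A" "open S" "\<And>i. i \<in> A \<Longrightarrow> smooth_on S (f i)"
  shows "smooth_on S (\<lambda>w. \<Prod>i\<in>A. f i w)"
  using assms by (induction A rule: finite_induct) (auto intro: smooth_on_mult smooth_on_const)

lemma smooth_on_smooth_upto_0: "smooth_on S f \<Longrightarrow> smooth_upto S 0 f"
  unfolding smooth_on_iff_smooth_upto by blast

lemma smooth_on_continuous_on: "smooth_on S f \<Longrightarrow> continuous_on S f"
  using smooth_on_smooth_upto_0 unfolding smooth_upto_0_iff by blast

lemma smooth_on_has_pdir:
  assumes "smooth_on S f" "w \<in> S" "b \<in> Basis"
  shows "((\<lambda>t. f (w + t *\<^sub>R b)) has_real_derivative pdir b f w) (at 0)"
  using smooth_on_smooth_upto_0[OF assms(1)] assms(2,3) unfolding smooth_upto_0_iff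
  by (blast intro: has_real_derivative_pdir)

lemma has_real_derivative_line_shift:
  fixes p c :: "'a::real_vector"
  assumes "((\<lambda>u. f ((p + t *\<^sub>R c) + u *\<^sub>R c)) has_real_derivative D) (at 0)"
  shows "((\<lambda>u. f (p + u *\<^sub>R c)) has_real_derivative D) (at t)"
proof -
  have "(p + t *\<^sub>R c) + u *\<^sub>R c = p + (u + t) *\<^sub>R c" for u
    by (simp add: algebra_simps)
  with assms show ?thesis using DERIV_shift[of "\<lambda>u. f (p + u *\<^sub>R c)" D 0 t] by simp
qed

lemma smooth_on_has_real_derivative_line:
  assumes "smooth_on S g" "w + s *\<^sub>R u \<in> S" "u \<in> Basis"
  shows "((\<lambda>s. g (w + s *\<^sub>R u)) has_real_derivative pdir u g (w + s *\<^sub>R u)) (at s)"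
  by (rule has_real_derivative_line_shift[OF smooth_on_has_pdir[OF assms]])

lemma mvt_centered:
  fixes \<phi> \<phi>' :: "real \<Rightarrow> real"
  assumes "\<And>t. \<bar>t\<bar> \<le> \<bar>a\<bar> \<Longrightarrow> (\<phi> has_real_derivative \<phi>' t) (at t)"
  shows "\<exists>t. \<bar>t\<bar> \<le> \<bar>a\<bar> \<and> \<phi> a - \<phi> 0 = a * \<phi>' t"
proof (cases a "0::real" rule: linorder_cases)
  case less
  then obtain t where "a < t" "t < 0" "\<phi> 0 - \<phi> a = (0 - a) * \<phi>' t"
    using MVT2[of a 0 \<phi> \<phi>'] assms by auto
  then show ?thesis by (intro exI[of _ t]) (auto simp: algebra_simps)
next
  case greater
  then obtain t where "0 < t" "t < a" "\<phi> a - \<phi> 0 = (a - 0) * \<phi>' t"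
    using MVT2[of 0 a \<phi> \<phi>'] assms by auto
  then show ?thesis by (intro exI[of _ t]) auto
qed auto

lemma second_difference_mvt:
  assumes g: "smooth_on S g" and u: "u \<in> Basis" and v: "v \<in> Basis"
    and sq: "\<And>s t. \<bar>s\<bar> \<le> \<bar>h\<bar> \<Longrightarrow> \<bar>t\<bar> \<le> \<bar>h\<bar> \<Longrightarrow> z + s *\<^sub>R u + t *\<^sub>R v \<in> S"
  shows "\<exists>s t. \<bar>s\<bar> \<le> \<bar>h\<bar> \<and> \<bar>t\<bar> \<le> \<bar>h\<bar> \<and>
     g (z + h *\<^sub>R u + h *\<^sub>R v) - g (z + h *\<^sub>R u) - g (z + h *\<^sub>R v) + g z
       = h * h * pdir v (pdir u g) (z + s *\<^sub>R u + t *\<^sub>R v)"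
proof -
  define \<phi> where "\<phi> s = g ((z + h *\<^sub>R v) + s *\<^sub>R u) - g (z + s *\<^sub>R u)" for s
  have d\<phi>: "(\<phi> has_real_derivative (pdir u g ((z + h *\<^sub>R v) + s *\<^sub>R u) - pdir u g (z + s *\<^sub>R u))) (at s)"
    if "\<bar>s\<bar> \<le> \<bar>h\<bar>" for s
  proof -
    have "(z + h *\<^sub>R v) + s *\<^sub>R u \<in> S" "z + s *\<^sub>R u \<in> S"
      using sq[of s h] sq[of s 0] that by (simp_all add: add_ac)
    then show ?thesis unfolding \<phi>_def[abs_def]
      by (intro DERIV_diff smooth_on_has_real_derivative_line[OF g _ u])
  qed
  obtain s where s: "\<bar>s\<bar> \<le> \<bar>h\<bar>"
    "\<phi> h - \<phi> 0 = h * (pdir u g ((z + h *\<^sub>R v) + s *\<^sub>R u) - pdir u g (z + s *\<^sub>R u))"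
    using mvt_centered[OF d\<phi>] by blast
  define \<psi> where "\<psi> t = pdir u g ((z + s *\<^sub>R u) + t *\<^sub>R v)" for t
  have d\<psi>: "(\<psi> has_real_derivative pdir v (pdir u g) ((z + s *\<^sub>R u) + t *\<^sub>R v)) (at t)"
    if "\<bar>t\<bar> \<le> \<bar>h\<bar>" for t
    unfolding \<psi>_def[abs_def] using sq[of s t] that s(1)
    by (intro smooth_on_has_real_derivative_line[OF smooth_on_pdir[OF g u] _ v]) simp
  obtain t where t: "\<bar>t\<bar> \<le> \<bar>h\<bar>"
    "\<psi> h - \<psi> 0 = h * pdir v (pdir u g) ((z + s *\<^sub>R u) + t *\<^sub>R v)"
    using mvt_centered[OF d\<psi>] by blast
  have "g (z + h *\<^sub>R u + h *\<^sub>R v) - g (z + h *\<^sub>R u) - g (z + h *\<^sub>R v) + g z = \<phi> h - \<phi> 0"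
    unfolding \<phi>_def by (simp add: add_ac)
  also have "\<dots> = h * (\<psi> h - \<psi> 0)"
    unfolding s(2) \<psi>_def by (simp add: add_ac)
  also have "\<dots> = h * h * pdir v (pdir u g) (z + s *\<^sub>R u + t *\<^sub>R v)"
    unfolding t(2) by simp
  finally show ?thesis using s(1) t(1) by blast
qed

lemma second_difference_tendsto:
  assumes g: "smooth_on S g" and z: "z \<in> S" and u: "u \<in> Basis" and v: "v \<in> Basis"
  shows "((\<lambda>h. (g (z + h *\<^sub>R u + h *\<^sub>R v) - g (z + h *\<^sub>R u) - g (z + h *\<^sub>R v) + g z) / (h * h))
           \<longlongrightarrow> pdir v (pdir u g) z) (at_right 0)"
  unfolding tendsto_iff
proof (intro allI impI)
  fix e :: real assume "e > 0"
  let ?A = "pdir v (pdir u g)"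
  have "continuous (at z) ?A"
    using smooth_on_continuous_on[OF smooth_on_pdir[OF smooth_on_pdir[OF g u] v]]
      smooth_on_open[OF g] z continuous_on_eq_continuous_at by blast
  then obtain d where d: "d > 0" "\<And>w. dist w z < d \<Longrightarrow> dist (?A w) (?A z) < e"
    using \<open>e > 0\<close> unfolding continuous_at_eps_delta by blast
  obtain r where r: "r > 0" "ball z r \<subseteq> S"
    using smooth_on_open[OF g] z open_contains_ball by blast
  have near: "dist (z + s *\<^sub>R u + t *\<^sub>R v) z < min r d"
    if "\<bar>s\<bar> \<le> h" "\<bar>t\<bar> \<le> h" "h < min r d / 2" for s t h
  proof -
    have "norm (s *\<^sub>R u + t *\<^sub>R v) \<le> \<bar>s\<bar> + \<bar>t\<bar>"
      using norm_triangle_ineq[of "s *\<^sub>R u" "t *\<^sub>R v"] u v by simp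
    then show ?thesis using that by (simp add: dist_norm add.assoc)
  qed
  have "\<forall>\<^sub>F h in at_right 0. h \<in> {0<..<min r d / 2}"
    using r(1) d(1) by (intro eventually_at_right_real) simp
  then show "\<forall>\<^sub>F h in at_right 0.
      dist ((g (z + h *\<^sub>R u + h *\<^sub>R v) - g (z + h *\<^sub>R u) - g (z + h *\<^sub>R v) + g z) / (h * h)) (?A z) < e"
  proof (rule eventually_mono)
    fix h assume h: "h \<in> {0<..<min r d / 2}"
    have "z + s *\<^sub>R u + t *\<^sub>R v \<in> S" if "\<bar>s\<bar> \<le> \<bar>h\<bar>" "\<bar>t\<bar> \<le> \<bar>h\<bar>" for s t
      using near[of s h t] that h r(2) by (auto simp: dist_commute)
    then obtain s t where st: "\<bar>s\<bar> \<le> \<bar>h\<bar>" "\<bar>t\<bar> \<le> \<bar>h\<bar>"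
      "g (z + h *\<^sub>R u + h *\<^sub>R v) - g (z + h *\<^sub>R u) - g (z + h *\<^sub>R v) + g z
         = h * h * ?A (z + s *\<^sub>R u + t *\<^sub>R v)"
      using second_difference_mvt[OF g u v] by blast
    have "dist (?A (z + s *\<^sub>R u + t *\<^sub>R v)) (?A z) < e"
      using d(2) near[of s h t] st h by fastforce
    then show "dist ((g (z + h *\<^sub>R u + h *\<^sub>R v) - g (z + h *\<^sub>R u) - g (z + h *\<^sub>R v) + g z) / (h * h))
        (?A z) < e"
      using st(3) h by simp
  qed
qed

text \<open>Schwarz's theorem: both mixed partials are the limit of the same second difference.\<close>
lemma smooth_on_pdir_commute:
  assumes f: "smooth_on S f" and z: "z \<in> S" and a: "a \<in> Basis" and b: "b \<in> Basis"
  shows "pdir a (pdir b f) z = pdir b (pdir a f) z"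
proof -
  have "z + h *\<^sub>R b + h *\<^sub>R a = z + h *\<^sub>R a + h *\<^sub>R b" for h
    by (simp add: algebra_simps)
  then have "((\<lambda>h. (f (z + h *\<^sub>R a + h *\<^sub>R b) - f (z + h *\<^sub>R a) - f (z + h *\<^sub>R b) + f z) / (h * h))
      \<longlongrightarrow> pdir a (pdir b f) z) (at_right 0)"
    using second_difference_tendsto[OF f z b a] by (simp add: algebra_simps)
  from tendsto_unique[OF trivial_limit_at_right_real this second_difference_tendsto[OF f z a b]]
  show ?thesis .
qed

lemma line_increment_estimate:
  fixes f :: "'a::real_normed_vector \<Rightarrow> real"
  assumes der: "\<And>t. t \<in> closed_segment 0 a \<Longrightarrow> ((\<lambda>u. f (p + u *\<^sub>R c)) has_real_derivative D t) (at t)"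
    and bound: "\<And>t. t \<in> closed_segment 0 a \<Longrightarrow> \<bar>D t - D0\<bar> \<le> e"
  shows "\<bar>f (p + a *\<^sub>R c) - f p - a * D0\<bar> \<le> e * \<bar>a\<bar>"
proof -
  define g where "g u = f (p + u *\<^sub>R c) - D0 * u" for u
  have "norm (g a - g 0) \<le> e * norm (a - 0)"
  proof (rule field_differentiable_bound[where f'="\<lambda>t. D t - D0"])
    fix t assume t: "t \<in> closed_segment 0 a"
    show "(g has_field_derivative D t - D0) (at t within closed_segment 0 a)"
      unfolding g_def[abs_def]
      by (rule has_field_derivative_at_within[OF DERIV_diff[OF der[OF t] DERIV_cmult_Id]])
    show "norm (D t - D0) \<le> e" using bound[OF t] by simp
  qed (simp_all add: convex_closed_segment)
  then show ?thesis by (simp add: g_def algebra_simps)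
qed

lemma norm_replace_coordinate:
  fixes v c :: "'a::euclidean_space"
  assumes "c \<in> Basis" "\<bar>t\<bar> \<le> \<bar>v \<bullet> c\<bar>"
  shows "norm (v - (v \<bullet> c) *\<^sub>R c + t *\<^sub>R c) \<le> norm v"
proof (rule norm_le_componentwise)
  fix b :: 'a assume "b \<in> Basis"
  then show "\<bar>(v - (v \<bullet> c) *\<^sub>R c + t *\<^sub>R c) \<bullet> b\<bar> \<le> \<bar>v \<bullet> b\<bar>"
    using assms by (cases "b = c") (simp_all add: inner_add_left inner_diff_left inner_not_same_Basis)
qed

lemma increment_along_coordinate:
  fixes f :: "'a::euclidean_space \<Rightarrow> real"
  assumes D: "\<And>w. w \<in> ball z r \<Longrightarrow> ((\<lambda>t. f (w + t *\<^sub>R c)) has_real_derivative Dc w) (at 0)"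
    and close: "\<And>w. w \<in> ball z r \<Longrightarrow> \<bar>Dc w - Dc z\<bar> \<le> e"
    and c: "c \<in> Basis" and v: "norm v < r"
  shows "\<bar>f (z + v) - f (z + (v - (v \<bullet> c) *\<^sub>R c)) - (v \<bullet> c) * Dc z\<bar> \<le> e * norm v"
proof -
  define a where "a = v \<bullet> c"
  define p where "p = z + (v - a *\<^sub>R c)"
  have near: "p + t *\<^sub>R c \<in> ball z r" if "t \<in> closed_segment 0 a" for t
  proof -
    have "\<bar>t\<bar> \<le> \<bar>a\<bar>" using that by (auto simp: closed_segment_eq_real_ivl split: if_splits)
    moreover have "dist z (p + t *\<^sub>R c) = norm (v - a *\<^sub>R c + t *\<^sub>R c)"
      unfolding p_def dist_norm by (metis add.assoc add_diff_cancel_left' norm_minus_commute)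
    ultimately show ?thesis
      using norm_replace_coordinate[OF c, of t v] v unfolding a_def by simp
  qed
  have "\<bar>f (p + a *\<^sub>R c) - f p - a * Dc z\<bar> \<le> e * \<bar>a\<bar>"
    using has_real_derivative_line_shift[OF D[OF near]] close[OF near]
    by (rule line_increment_estimate)
  moreover have "e * \<bar>a\<bar> \<le> e * norm v"
    using close[of z] v Basis_le_norm[OF c, of v] unfolding a_def by (simp add: mult_left_mono)
  ultimately show ?thesis unfolding p_def a_def by simp
qed

text \<open>\<open>f\<close> is differentiable at \<open>z\<close>, with partial derivatives \<open>D b z\<close>, along the
  coordinate subspace spanned by \<open>B\<close>.\<close>
definition linearizes_along :: "('a::euclidean_space \<Rightarrow> real) \<Rightarrow> ('a \<Rightarrow> 'a \<Rightarrow> real) \<Rightarrow> 'a \<Rightarrow> 'a set \<Rightarrow> bool"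
  where "linearizes_along f D z B \<longleftrightarrow> (\<forall>e>0. \<exists>d>0. \<forall>v::'a. (\<forall>b\<in>Basis - B. v \<bullet> b = 0) \<longrightarrow> norm v < d \<longrightarrow>
      \<bar>f (z + v) - f z - (\<Sum>b\<in>B. (v \<bullet> b) * D b z)\<bar> \<le> e * norm v)"

lemma linearizes_along_empty:
  fixes z :: "'a::euclidean_space"
  shows "linearizes_along f D z {}"
  unfolding linearizes_along_def
proof (intro allI impI exI[of _ 1] conjI)
  fix e :: real and v :: 'a assume "\<forall>b\<in>Basis - {}. v \<bullet> b = 0"
  then have "v = 0" using euclidean_all_zero_iff by auto
  then show "\<bar>f (z + v) - f z - (\<Sum>b\<in>{}. v \<bullet> b * D b z)\<bar> \<le> e * norm v" by simp
qed simp

lemma linearizes_along_insert: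
  fixes f :: "'a::euclidean_space \<Rightarrow> real"
  assumes S: "open S" "z \<in> S"
    and D: "\<And>w. w \<in> S \<Longrightarrow> ((\<lambda>t. f (w + t *\<^sub>R c)) has_real_derivative D c w) (at 0)"
    and C: "continuous_on S (D c)"
    and c: "c \<in> Basis" "c \<notin> B" and B: "B \<subseteq> Basis"
    and lin: "linearizes_along f D z B"
  shows "linearizes_along f D z (insert c B)"
  unfolding linearizes_along_def
proof (intro allI impI)
  fix e :: real assume e: "e > 0"
  obtain d1 where d1: "d1 > 0" and IH: "\<And>v. \<forall>b\<in>Basis - B. v \<bullet> b = 0 \<Longrightarrow> norm v < d1 \<Longrightarrow>
      \<bar>f (z + v) - f z - (\<Sum>b\<in>B. (v \<bullet> b) * D b z)\<bar> \<le> e/2 * norm v"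
    using lin e unfolding linearizes_along_def by (meson half_gt_zero)
  obtain d2 where d2: "d2 > 0" "\<And>w. dist w z < d2 \<Longrightarrow> dist (D c w) (D c z) < e/2"
    using C S e unfolding continuous_on_eq_continuous_at[OF S(1)] continuous_at_eps_delta
    by (meson half_gt_zero)
  obtain d3 where d3: "d3 > 0" "ball z d3 \<subseteq> S" using S open_contains_ball by blast
  define r where "r = min d1 (min d2 d3)"
  show "\<exists>r>0. \<forall>v. (\<forall>b\<in>Basis - insert c B. v \<bullet> b = 0) \<longrightarrow> norm v < r \<longrightarrow>
      \<bar>f (z + v) - f z - (\<Sum>b\<in>insert c B. v \<bullet> b * D b z)\<bar> \<le> e * norm v"
  proof (intro exI[of _ r] conjI allI impI)
    show "r > 0" using d1 d2 d3 unfolding r_def by simp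
    fix v :: 'a assume v0: "\<forall>b\<in>Basis - insert c B. v \<bullet> b = 0" and v: "norm v < r"
    define v' where "v' = v - (v \<bullet> c) *\<^sub>R c"
    have v'b: "v' \<bullet> b = (if b = c then 0 else v \<bullet> b)" if "b \<in> Basis" for b
      using that c unfolding v'_def by (auto simp: inner_diff_left inner_not_same_Basis)
    have "\<bar>f (z + v) - f (z + v') - (v \<bullet> c) * D c z\<bar> \<le> e/2 * norm v"
      unfolding v'_def
    proof (rule increment_along_coordinate[OF _ _ c(1) v])
      fix w assume w: "w \<in> ball z r"
      then show "((\<lambda>t. f (w + t *\<^sub>R c)) has_real_derivative D c w) (at 0)"
        using D d3(2) unfolding r_def by auto
      show "\<bar>D c w - D c z\<bar> \<le> e/2"
        using d2(2)[of w] w unfolding r_def by (simp add: dist_commute dist_real_def)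
    qed
    moreover have "\<bar>f (z + v') - f z - (\<Sum>b\<in>B. (v \<bullet> b) * D b z)\<bar> \<le> e/2 * norm v"
    proof -
      have "norm v' \<le> norm v"
        using norm_replace_coordinate[OF c(1), of 0 v] unfolding v'_def by simp
      moreover have "(\<Sum>b\<in>B. (v' \<bullet> b) * D b z) = (\<Sum>b\<in>B. (v \<bullet> b) * D b z)"
        using v'b c B by (intro sum.cong) (auto simp: subset_iff)
      moreover have "\<forall>b\<in>Basis - B. v' \<bullet> b = 0" using v0 v'b by auto
      ultimately show ?thesis
        using IH[of v'] v e unfolding r_def by (smt (verit) mult_left_mono half_gt_zero)
    qed
    moreover have "(\<Sum>b\<in>insert c B. v \<bullet> b * D b z) = (v \<bullet> c) * D c z + (\<Sum>b\<in>B. v \<bullet> b * D b z)"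
      using finite_subset[OF B finite_Basis] c(2) by simp
    ultimately show "\<bar>f (z + v) - f z - (\<Sum>b\<in>insert c B. v \<bullet> b * D b z)\<bar> \<le> e * norm v"
      by linarith
  qed
qed

lemma has_derivative_of_continuous_partials:
  fixes f :: "'a::euclidean_space \<Rightarrow> real"
  assumes S: "open S" "z \<in> S"
    and D: "\<And>w b. w \<in> S \<Longrightarrow> b \<in> Basis \<Longrightarrow> ((\<lambda>t. f (w + t *\<^sub>R b)) has_real_derivative D b w) (at 0)"
    and C: "\<And>b. b \<in> Basis \<Longrightarrow> continuous_on S (D b)"
  shows "(f has_derivative (\<lambda>v. \<Sum>b\<in>Basis. (v \<bullet> b) * D b z)) (at z)"
  unfolding has_derivative_at_alt
proof (intro conjI allI impI)
  show "bounded_linear (\<lambda>v. \<Sum>b\<in>Basis. v \<bullet> b * D b z)"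
    by (intro bounded_linear_intros)
  have "linearizes_along f D z Basis"
    using finite_Basis order_refl
  proof (induction rule: finite_subset_induct')
    case (insert c B)
    then show ?case by (intro linearizes_along_insert[OF S]) (auto intro: D C)
  qed (rule linearizes_along_empty)
  moreover fix e :: real assume "e > 0"
  ultimately obtain d where "d > 0" and d: "\<And>v. norm v < d \<Longrightarrow>
      \<bar>f (z + v) - f z - (\<Sum>b\<in>Basis. (v \<bullet> b) * D b z)\<bar> \<le> e * norm v"
    unfolding linearizes_along_def by auto
  show "\<exists>d>0. \<forall>y. norm (y - z) < d \<longrightarrow>
      norm (f y - f z - (\<Sum>b\<in>Basis. (y - z) \<bullet> b * D b z)) \<le> e * norm (y - z)"
  proof (intro exI[of _ d] conjI allI impI \<open>d > 0\<close>)
    fix y assume "norm (y - z) < d"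
    then show "norm (f y - f z - (\<Sum>b\<in>Basis. (y - z) \<bullet> b * D b z)) \<le> e * norm (y - z)"
      using d[of "y - z"] by simp
  qed
qed

section \<open>Smooth functions on the tangent bundle of a chart\<close>

definition smooth_on2 :: "((real^'n) \<times> (real^'n)) set \<Rightarrow> 'n::finite fin \<Rightarrow> bool" where
  "smooth_on2 S h \<longleftrightarrow> smooth_on S (\<lambda>z. h (fst z) (snd z))"

lemma sum_Basis_vec: "(\<Sum>b\<in>(Basis::(real^'n) set). f b) = (\<Sum>i\<in>UNIV. f (axis i 1))"
proof -
  have B: "(Basis :: (real^'n) set) = range (\<lambda>i. axis i 1)"
    by (auto simp: Basis_vec_def)
  show ?thesis unfolding B by (subst sum.reindex) (auto simp: inj_on_def axis_eq_axis)
qed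

lemma sum_Basis_prod:
  "(\<Sum>b\<in>(Basis::('a::euclidean_space \<times> 'b::euclidean_space) set). f b)
     = (\<Sum>u\<in>Basis. f (u, 0)) + (\<Sum>v\<in>Basis. f (0, v))"
proof -
  have "inj_on (\<lambda>u. (u::'a, 0::'b)) Basis" "inj_on (\<lambda>u. (0::'a, u::'b)) Basis"
    by (auto intro!: inj_onI)
  then show ?thesis
    unfolding Basis_prod_def by (subst sum.union_disjoint) (auto simp: Basis_prod_def sum.reindex)
qed

lemma axis_x_in_Basis: "(axis i 1, 0::real^'n) \<in> (Basis :: ((real^'n) \<times> (real^'n)) set)"
  by (simp add: Basis_prod_def)

lemma axis_y_in_Basis: "(0::real^'n, axis i 1) \<in> (Basis :: ((real^'n) \<times> (real^'n)) set)"
  by (simp add: Basis_prod_def)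

lemma dX_eq_pdir: "dX i h x y = pdir (axis i 1, 0) (\<lambda>z. h (fst z) (snd z)) (x, y)"
  by (simp add: dX_def pdir_def)

lemma dY_eq_pdir: "dY i h x y = pdir (0, axis i 1) (\<lambda>z. h (fst z) (snd z)) (x, y)"
  by (simp add: dY_def pdir_def)

lemma smooth_on2_dX: "smooth_on2 S h \<Longrightarrow> smooth_on2 S (dX i h)"
  unfolding smooth_on2_def dX_eq_pdir prod.collapse by (rule smooth_on_pdir[OF _ axis_x_in_Basis])

lemma smooth_on2_dY: "smooth_on2 S h \<Longrightarrow> smooth_on2 S (dY i h)"
  unfolding smooth_on2_def dY_eq_pdir prod.collapse by (rule smooth_on_pdir[OF _ axis_y_in_Basis])

lemma smooth_on2_add: "smooth_on2 S f \<Longrightarrow> smooth_on2 S g \<Longrightarrow> smooth_on2 S (\<lambda>x y. f x y + g x y)"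
  unfolding smooth_on2_def by (rule smooth_on_add)

lemma smooth_on2_diff: "smooth_on2 S f \<Longrightarrow> smooth_on2 S g \<Longrightarrow> smooth_on2 S (\<lambda>x y. f x y - g x y)"
  unfolding smooth_on2_def by (rule smooth_on_diff)

lemma smooth_on2_mult: "smooth_on2 S f \<Longrightarrow> smooth_on2 S g \<Longrightarrow> smooth_on2 S (\<lambda>x y. f x y * g x y)"
  unfolding smooth_on2_def by (rule smooth_on_mult)

lemma smooth_on2_const: "open S \<Longrightarrow> smooth_on2 S (\<lambda>x y. c)"
  unfolding smooth_on2_def by (rule smooth_on_const)

lemma smooth_on2_cmult: "smooth_on2 S f \<Longrightarrow> smooth_on2 S (\<lambda>x y. c * f x y)"
  unfolding smooth_on2_def by (rule smooth_on_cmult)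

lemma smooth_on2_divide:
  "smooth_on2 S f \<Longrightarrow> smooth_on2 S g \<Longrightarrow> \<forall>z\<in>S. g (fst z) (snd z) \<noteq> 0 \<Longrightarrow> smooth_on2 S (\<lambda>x y. f x y / g x y)"
  unfolding smooth_on2_def by (rule smooth_on_divide)

lemma smooth_on2_sum:
  "finite A \<Longrightarrow> open S \<Longrightarrow> (\<And>i. i \<in> A \<Longrightarrow> smooth_on2 S (f i)) \<Longrightarrow>
   smooth_on2 S (\<lambda>x y. \<Sum>i\<in>A. f i x y)"
  unfolding smooth_on2_def by (rule smooth_on_sum)

lemma smooth_on2_prod:
  "finite A \<Longrightarrow> open S \<Longrightarrow> (\<And>i. i \<in> A \<Longrightarrow> smooth_on2 S (f i)) \<Longrightarrow>
   smooth_on2 S (\<lambda>x y. \<Prod>i\<in>A. f i x y)"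
  unfolding smooth_on2_def by (rule smooth_on_prod)

lemma smooth_on2_vec_nth: "open S \<Longrightarrow> smooth_on2 S (\<lambda>x y. y $ k)"
  using smooth_on_inner[of S "(0, axis k 1)"]
  unfolding smooth_on2_def by (simp add: inner_Pair_0 inner_axis)

lemma smooth_on2_cong_open:
  "smooth_on2 S f \<Longrightarrow> \<forall>z\<in>S. f (fst z) (snd z) = g (fst z) (snd z) \<Longrightarrow> smooth_on2 S g"
  unfolding smooth_on2_def by (rule smooth_on_cong_open)

lemma smooth_on2_det:
  fixes M :: "real^'n::finite \<Rightarrow> real^'n \<Rightarrow> real^'k::finite^'k"
  assumes "open S" "\<And>a b. smooth_on2 S (\<lambda>x y. M x y $ a $ b)"
  shows "smooth_on2 S (\<lambda>x y. det (M x y))"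
  unfolding det_def
  by (intro smooth_on2_sum smooth_on2_cmult smooth_on2_prod assms finite_permutations) simp_all

lemma dY_commute:
  assumes "smooth_on2 S h" "(x, y) \<in> S"
  shows "dY i (dY j h) x y = dY j (dY i h) x y"
  using smooth_on_pdir_commute[OF assms[unfolded smooth_on2_def] axis_y_in_Basis axis_y_in_Basis]
  by (simp add: dY_eq_pdir)

lemma has_real_derivative_dY:
  assumes "smooth_on2 S f" "(x, y) \<in> S"
  shows "((\<lambda>t. f x (y + t *\<^sub>R axis r 1)) has_real_derivative dY r f x y) (at 0)"
  using smooth_on_has_pdir[OF assms[unfolded smooth_on2_def] axis_y_in_Basis, of r]
  by (simp add: dY_eq_pdir)

lemma dY_cong_open:
  assumes "open S" "\<forall>z\<in>S. f (fst z) (snd z) = g (fst z) (snd z)" "(x, y) \<in> S"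
  shows "dY r f x y = dY r g x y"
  unfolding dY_eq_pdir by (rule pdir_cong_open[OF assms(1,3)]) (use assms(2) in auto)

lemma dX_cong_open:
  assumes "open S" "\<forall>z\<in>S. f (fst z) (snd z) = g (fst z) (snd z)" "(x, y) \<in> S"
  shows "dX r f x y = dX r g x y"
  unfolding dX_eq_pdir by (rule pdir_cong_open[OF assms(1,3)]) (use assms(2) in auto)

lemma smooth_on2_has_real_derivative_curve:
  assumes h: "smooth_on2 S h" and z: "(xc s, yc s) \<in> S"
    and dx: "(xc has_vector_derivative x') (at s)" and dy: "(yc has_vector_derivative y') (at s)"
  shows "((\<lambda>s. h (xc s) (yc s)) has_real_derivative
     (\<Sum>i\<in>UNIV. dX i h (xc s) (yc s) * x' $ i) + (\<Sum>i\<in>UNIV. dY i h (xc s) (yc s) * y' $ i)) (at s)"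
proof -
  let ?H = "\<lambda>z. h (fst z) (snd z)" and ?z = "(xc s, yc s)"
  define D where "D = (\<Sum>b\<in>Basis. ((x', y') \<bullet> b) * pdir b ?H ?z)"
  have H: "smooth_on S ?H" using h unfolding smooth_on2_def .
  have "(?H has_derivative (\<lambda>v. \<Sum>b\<in>Basis. (v \<bullet> b) * pdir b ?H ?z)) (at ?z)"
    using smooth_on_has_pdir[OF H] smooth_on_continuous_on[OF smooth_on_pdir[OF H]]
    by (intro has_derivative_of_continuous_partials[OF smooth_on_open[OF H] z])
  from has_derivative_compose[OF has_vector_derivative_Pair[OF dx dy, unfolded has_vector_derivative_def] this]
  have "((\<lambda>s. h (xc s) (yc s)) has_derivative
      (\<lambda>t. \<Sum>b\<in>Basis. ((t *\<^sub>R (x', y')) \<bullet> b) * pdir b ?H ?z)) (at s)"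
    by simp
  moreover have "(\<lambda>t. \<Sum>b\<in>Basis. ((t *\<^sub>R (x', y')) \<bullet> b) * pdir b ?H ?z) = (\<lambda>t. D * t)"
    unfolding D_def sum_distrib_right
    by (intro ext sum.cong refl) (simp only: inner_scaleR_left mult_ac)
  ultimately have "((\<lambda>s. h (xc s) (yc s)) has_derivative (\<lambda>t. D * t)) (at s)"
    by simp
  moreover have "D = (\<Sum>i\<in>UNIV. dX i h (xc s) (yc s) * x' $ i) + (\<Sum>i\<in>UNIV. dY i h (xc s) (yc s) * y' $ i)"
    unfolding D_def sum_Basis_prod sum_Basis_vec
    by (simp add: dX_eq_pdir dY_eq_pdir inner_axis mult.commute)
  ultimately show ?thesis by (simp add: has_field_derivative_def)
qed

lemma euler_homogeneous:
  assumes f: "smooth_on2 S f" and xy: "(x, y) \<in> S" and hom: "\<forall>c>0. f x (c *\<^sub>R y) = c ^ k * f x y"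
  shows "(\<Sum>i\<in>UNIV. dY i f x y * y $ i) = real k * f x y"
proof -
  have "((\<lambda>c. f x (c *\<^sub>R y)) has_real_derivative (\<Sum>i\<in>UNIV. dY i f x y * y $ i)) (at 1)"
    using smooth_on2_has_real_derivative_curve[OF f, of "\<lambda>c. x" 1 "\<lambda>c. c *\<^sub>R y" 0 y] xy
    by (simp add: has_vector_derivative_def has_derivative_scaleR_left[OF has_derivative_ident])
  moreover have "((\<lambda>c. f x (c *\<^sub>R y)) has_real_derivative real k * f x y) (at 1)"
  proof -
    have "\<forall>\<^sub>F c in nhds (1::real). c \<in> {0<..}" by (rule eventually_nhds_in_open) auto
    then have "\<forall>\<^sub>F c in nhds 1. c ^ k * f x y = f x (c *\<^sub>R y)"
      by (rule eventually_mono) (use hom in auto)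
    moreover have "((\<lambda>c. c ^ k * f x y) has_real_derivative real k * f x y) (at 1)"
      by (auto intro!: derivative_eq_intros)
    ultimately show ?thesis by (rule DERIV_cong_ev[OF refl _ refl, THEN iffD1])
  qed
  ultimately show ?thesis by (rule DERIV_unique)
qed

section \<open>The fundamental tensor of a Finsler chart\<close>

locale finsler =
  fixes U :: "(real^'n::finite) set" and F :: "'n fin"
  assumes finsler_chart: "finsler_chart U F"
begin

abbreviation TU0 :: "((real^'n) \<times> (real^'n)) set" where
  "TU0 \<equiv> U \<times> (UNIV - {0})"

lemma open_TU0: "open TU0"
  using finsler_chart unfolding finsler_chart_def by (intro open_Times) auto

lemma smooth_F: "smooth_on2 TU0 F"
  using finsler_chart unfolding finsler_chart_def smooth_on2_def by simp

lemma smooth_Fsq: "smooth_on2 TU0 (Fsq F)"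
  by (rule smooth_on2_cong_open[OF smooth_on2_mult[OF smooth_F smooth_F]])
    (simp add: Fsq_def power2_eq_square)

lemma smooth_g: "smooth_on2 TU0 (gF F i j)"
  unfolding gF_def by (intro smooth_on2_cmult smooth_on2_dY smooth_Fsq)

lemma F_homogeneous: "x \<in> U \<Longrightarrow> c > 0 \<Longrightarrow> F x (c *\<^sub>R y) = c * F x y"
  using finsler_chart unfolding finsler_chart_def by simp

lemma F_zero: "x \<in> U \<Longrightarrow> F x 0 = 0"
  using F_homogeneous[of x 2 0] by simp

lemma Fsq_homogeneous: "x \<in> U \<Longrightarrow> c > 0 \<Longrightarrow> Fsq F x (c *\<^sub>R y) = c^2 * Fsq F x y"
  unfolding Fsq_def by (simp add: F_homogeneous power_mult_distrib)

lemma g_pos_def: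
  "x \<in> U \<Longrightarrow> y \<noteq> 0 \<Longrightarrow> v \<noteq> 0 \<Longrightarrow> (\<Sum>i\<in>UNIV. \<Sum>j\<in>UNIV. gF F i j x y * v $ i * v $ j) > 0"
  using finsler_chart unfolding finsler_chart_def by blast

lemma g_sym: "(x, y) \<in> TU0 \<Longrightarrow> gF F i j x y = gF F j i x y"
  unfolding gF_def using dY_commute[OF smooth_Fsq] by simp

lemma dY_g_sym: "(x, y) \<in> TU0 \<Longrightarrow> dY r (gF F i j) x y = dY r (gF F j i) x y"
  using dY_cong_open[OF open_TU0] g_sym by auto

lemma delta_g_sym: "(x, y) \<in> TU0 \<Longrightarrow> delta F m (gF F i j) x y = delta F m (gF F j i) x y"
  unfolding delta_def using dX_cong_open[OF open_TU0] dY_g_sym g_sym by auto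

lemma dY_Fsq_homogeneous:
  assumes xy: "(x, y) \<in> TU0" and c: "c > 0"
  shows "dY j (Fsq F) x (c *\<^sub>R y) = c * dY j (Fsq F) x y"
proof -
  define \<phi> where "\<phi> u = Fsq F x (y + u *\<^sub>R axis j 1)" for u
  have "DERIV \<phi> ((\<lambda>t. t / c) 0) :> dY j (Fsq F) x y"
    unfolding \<phi>_def using has_real_derivative_dY[OF smooth_Fsq xy] by simp
  moreover have "((\<lambda>t. t / c) has_real_derivative 1 / c) (at 0)"
    using c by (auto intro!: derivative_eq_intros)
  ultimately have "((\<lambda>t. \<phi> (t / c)) has_real_derivative dY j (Fsq F) x y * (1 / c)) (at 0)"
    using DERIV_chain' by blast
  from DERIV_cmult[OF this, of "c^2"]
  have "((\<lambda>t. c^2 * \<phi> (t / c)) has_real_derivative c * dY j (Fsq F) x y) (at 0)"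
    using c by (simp add: power2_eq_square field_simps)
  moreover have "(\<lambda>t. Fsq F x (c *\<^sub>R y + t *\<^sub>R axis j 1)) = (\<lambda>t. c^2 * \<phi> (t / c))"
  proof
    fix t
    have "c *\<^sub>R y + t *\<^sub>R axis j 1 = c *\<^sub>R (y + (t / c) *\<^sub>R axis j 1)"
      using c by (simp add: algebra_simps)
    then show "Fsq F x (c *\<^sub>R y + t *\<^sub>R axis j 1) = c^2 * \<phi> (t / c)"
      unfolding \<phi>_def using Fsq_homogeneous xy c by simp
  qed
  ultimately show ?thesis unfolding dY_def by (simp add: DERIV_imp_deriv)
qed

lemma euler_Fsq: "(x, y) \<in> TU0 \<Longrightarrow> (\<Sum>i\<in>UNIV. dY i (Fsq F) x y * y $ i) = 2 * Fsq F x y"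
  using euler_homogeneous[OF smooth_Fsq, of x y 2] Fsq_homogeneous by simp

lemma euler_dY_Fsq:
  "(x, y) \<in> TU0 \<Longrightarrow> (\<Sum>i\<in>UNIV. dY i (dY j (Fsq F)) x y * y $ i) = dY j (Fsq F) x y"
  using euler_homogeneous[OF smooth_on2_dY[OF smooth_Fsq, of j], of x y 1] dY_Fsq_homogeneous by simp

lemma g_contract_y: "(x, y) \<in> TU0 \<Longrightarrow> (\<Sum>i\<in>UNIV. gF F i j x y * y $ i) = 1/2 * dY j (Fsq F) x y"
  using euler_dY_Fsq[of x y j] unfolding gF_def by (simp only: mult.assoc sum_distrib_left[symmetric])

lemma gform_self: "(x, y) \<in> TU0 \<Longrightarrow> gform F x y y y = Fsq F x y"
proof -
  assume xy: "(x, y) \<in> TU0"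
  have "gform F x y y y = (\<Sum>j\<in>UNIV. (\<Sum>i\<in>UNIV. gF F i j x y * y $ i) * y $ j)"
    unfolding gform_def by (subst sum.swap) (simp add: sum_distrib_right)
  also have "\<dots> = 1/2 * (\<Sum>j\<in>UNIV. dY j (Fsq F) x y * y $ j)"
    by (simp add: g_contract_y[OF xy] sum_distrib_left mult.assoc)
  finally show ?thesis using euler_Fsq[OF xy] by simp
qed

text \<open>The Cartan tensor is annihilated by the reference vector: differentiate
  \<open>g_contract_y\<close> in the direction of \<open>y\<close>.\<close>
lemma dY_g_contract_y:
  assumes xy: "(x, y) \<in> TU0"
  shows "(\<Sum>i\<in>UNIV. y $ i * dY r (gF F i j) x y) = 0"
proof -
  define Q where "Q t = (\<Sum>i\<in>UNIV. (y + t *\<^sub>R axis r 1) $ i * gF F i j x (y + t *\<^sub>R axis r 1))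
      - 1/2 * dY j (Fsq F) x (y + t *\<^sub>R axis r 1)" for t
  have "(Q has_real_derivative
      (\<Sum>i\<in>UNIV. (if i = r then 1 else 0) * gF F i j x y + y $ i * dY r (gF F i j) x y)
        - 1/2 * dY r (dY j (Fsq F)) x y) (at 0)"
    unfolding Q_def
  proof (intro DERIV_diff DERIV_sum DERIV_cmult)
    fix i
    have "((\<lambda>t. (y + t *\<^sub>R axis r 1) $ i) has_real_derivative (if i = r then 1 else 0)) (at 0)"
      by (auto intro!: derivative_eq_intros simp: axis_def)
    from DERIV_mult'[OF this has_real_derivative_dY[OF smooth_g xy, of i j r]]
    show "((\<lambda>t. (y + t *\<^sub>R axis r 1) $ i * gF F i j x (y + t *\<^sub>R axis r 1)) has_real_derivative
        (if i = r then 1 else 0) * gF F i j x y + y $ i * dY r (gF F i j) x y) (at 0)"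
      by (rule DERIV_cong) simp
  qed (rule has_real_derivative_dY[OF smooth_on2_dY[OF smooth_Fsq] xy])
  moreover have "(Q has_real_derivative 0) (at 0)"
  proof -
    have "\<forall>\<^sub>F t in nhds 0. (x, y + t *\<^sub>R axis r 1) \<in> TU0"
      using eventually_in_open_on_line[OF open_TU0 xy, of "(0, axis r 1)"] by simp
    then have "\<forall>\<^sub>F t in nhds 0. 0 = Q t"
    proof (rule eventually_mono)
      fix t assume "(x, y + t *\<^sub>R axis r 1) \<in> TU0"
      from g_contract_y[OF this, of j] show "0 = Q t" unfolding Q_def by (simp add: mult.commute)
    qed
    then show ?thesis by (rule DERIV_cong_ev[OF refl _ refl, THEN iffD1]) simp
  qed
  ultimately have "(\<Sum>i\<in>UNIV. (if i = r then 1 else 0) * gF F i j x y + y $ i * dY r (gF F i j) x y)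
      = 1/2 * dY r (dY j (Fsq F)) x y"
    using DERIV_unique by fastforce
  moreover have "(\<Sum>i\<in>UNIV. (if i = r then 1 else 0) * gF F i j x y) = gF F r j x y"
    by (simp add: if_distrib[of "\<lambda>c. c * _"] cong: if_cong)
  ultimately show ?thesis unfolding sum.distrib gF_def by simp
qed

lemma matrix_inv_right: "invertible A \<Longrightarrow> A ** matrix_inv A = mat 1"
  unfolding invertible_def matrix_inv_def by (rule someI_ex[THEN conjunct1])

lemma gmat_invertible:
  assumes xy: "(x, y) \<in> TU0"
  shows "invertible (gmat F x y)"
proof -
  have "v = 0" if "gmat F x y *v v = 0" for v
  proof (rule ccontr)
    have "(\<Sum>i\<in>UNIV. \<Sum>j\<in>UNIV. gF F i j x y * v $ i * v $ j) = (\<Sum>i\<in>UNIV. v $ i * (gmat F x y *v v) $ i)"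
      by (simp add: matrix_vector_mult_def gmat_def sum_distrib_left mult_ac)
    also have "\<dots> = 0" using that by simp
    finally show "v \<noteq> 0 \<Longrightarrow> False" using g_pos_def xy by fastforce
  qed
  then obtain B where "B ** gmat F x y = mat 1" using matrix_left_invertible_ker by blast
  then show ?thesis unfolding invertible_def using matrix_left_right_inverse by blast
qed

lemma g_ginv: "(x, y) \<in> TU0 \<Longrightarrow> (\<Sum>k\<in>UNIV. gF F j k x y * ginv F k l x y) = (if j = l then 1 else 0)"
  using matrix_inv_right[OF gmat_invertible, of x y]
  by (auto simp: matrix_matrix_mult_def mat_def gmat_def ginv_def vec_eq_iff)

lemma ginv_cramer:
  assumes xy: "(x, y) \<in> TU0"
  shows "ginv F i j x y
    = det (\<chi> a b. if b = i then axis j 1 $ a else gmat F x y $ a $ b) / det (gmat F x y)"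
proof -
  let ?A = "gmat F x y"
  have "?A *v (matrix_inv ?A *v axis j 1) = axis j 1"
    by (simp add: matrix_vector_mul_assoc matrix_inv_right[OF gmat_invertible[OF xy]])
  then have "matrix_inv ?A *v axis j 1
      = (\<chi> k. det (\<chi> a b. if b = k then axis j 1 $ a else ?A $ a $ b) / det ?A)"
    using cramer invertible_det_nz gmat_invertible[OF xy] by blast
  then have "(matrix_inv ?A *v axis j 1) $ i
      = det (\<chi> a b. if b = i then axis j 1 $ a else ?A $ a $ b) / det ?A"
    by simp
  then show ?thesis by (simp add: matrix_vector_mult_basis column_def ginv_def)
qed

lemma smooth_ginv: "smooth_on2 TU0 (ginv F i j)"
proof (rule smooth_on2_cong_open)
  have cols: "smooth_on2 TU0 (\<lambda>x y. (\<chi> a b. if b = i then axis j 1 $ a else gmat F x y $ a $ b) $ a $ b)" for a b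
    by (cases "b = i") (simp_all add: smooth_on2_const[OF open_TU0] gmat_def smooth_g)
  have "smooth_on2 TU0 (\<lambda>x y. det (gmat F x y))"
    by (rule smooth_on2_det[OF open_TU0]) (simp add: gmat_def smooth_g)
  moreover have "\<forall>z\<in>TU0. det (gmat F (fst z) (snd z)) \<noteq> 0"
    using gmat_invertible invertible_det_nz by auto
  ultimately show "smooth_on2 TU0 (\<lambda>x y.
      det (\<chi> a b. if b = i then axis j 1 $ a else gmat F x y $ a $ b) / det (gmat F x y))"
    by (rule smooth_on2_divide[OF smooth_on2_det[OF open_TU0 cols]])
qed (simp add: ginv_cramer)

lemma smooth_Gs: "smooth_on2 TU0 (Gs F r)"
  unfolding Gs_def
  by (intro smooth_on2_cmult smooth_on2_sum smooth_on2_mult smooth_on2_diff smooth_ginv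
      smooth_on2_dX smooth_on2_dY smooth_Fsq smooth_on2_vec_nth open_TU0) simp_all

lemma smooth_delta: "smooth_on2 TU0 h \<Longrightarrow> smooth_on2 TU0 (delta F i h)"
  unfolding delta_def Gn_def
  by (intro smooth_on2_sum smooth_on2_mult smooth_on2_diff smooth_on2_dX smooth_on2_dY
      smooth_Gs open_TU0) simp_all

lemma smooth_Gam: "smooth_on2 TU0 (Gam F k i j)"
  unfolding Gam_def
  by (intro smooth_on2_cmult smooth_on2_sum smooth_on2_mult smooth_on2_diff smooth_on2_add
      smooth_ginv smooth_delta smooth_g open_TU0) simp_all

lemma smooth_Cup: "smooth_on2 TU0 (Cup F i j k)"
  unfolding Cup_def Clow_def
  by (intro smooth_on2_sum smooth_on2_mult smooth_ginv smooth_on2_cmult smooth_on2_dY smooth_g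
      open_TU0) simp_all

end

section \<open>Metric compatibility along the velocity\<close>

text \<open>The zeroth-order part of \<open>covD\<close>: at \<open>(x, y) = (c, c')\<close>, with \<open>b = c'' + 2 G\<close>.\<close>
definition conn :: "'n fin \<Rightarrow> real^'n \<Rightarrow> real^'n \<Rightarrow> real^'n \<Rightarrow> real^'n \<Rightarrow> real^'n::finite" where
  "conn F x y b W = (\<chi> k. \<Sum>i\<in>UNIV. W $ i *
     ((\<Sum>j\<in>UNIV. Gam F k i j x y * y $ j) + (\<Sum>r\<in>UNIV. Cup F k i r x y * b $ r)))"

definition conn_low :: "'n fin \<Rightarrow> real^'n \<Rightarrow> real^'n \<Rightarrow> real^'n \<Rightarrow> 'n \<Rightarrow> 'n::finite \<Rightarrow> real" where
  "conn_low F x y b i j = (\<Sum>k\<in>UNIV. gF F k j x y *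
     ((\<Sum>m\<in>UNIV. Gam F k i m x y * y $ m) + (\<Sum>r\<in>UNIV. Cup F k i r x y * b $ r)))"

lemma covD_eq_conn:
  "covD F c W s = (\<chi> k. vd (\<lambda>t. W t $ k) s)
     + conn F (c s) (vd c s) (\<chi> r. vd (vd c) s $ r + 2 * Gs F r (c s) (vd c s)) (W s)"
  by (simp add: covD_def conn_def vec_eq_iff)

lemma gform_add_left: "gform F x y (U + V) W = gform F x y U W + gform F x y V W"
  by (simp add: gform_def distrib_left distrib_right sum.distrib)

lemma gform_add_right: "gform F x y U (V + W) = gform F x y U V + gform F x y U W"
  by (simp add: gform_def distrib_left sum.distrib)

lemma gform_scaleR_left: "gform F x y (c *\<^sub>R V) W = c * gform F x y V W"
  by (simp add: gform_def sum_distrib_left mult_ac)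

lemma gform_uminus_left: "gform F x y (- V) W = - gform F x y V W"
  using gform_scaleR_left[of F x y "-1" V W] by simp

lemma gform_conn_left:
  "gform F x y (conn F x y b W) Z = (\<Sum>i\<in>UNIV. \<Sum>j\<in>UNIV. W $ i * Z $ j * conn_low F x y b i j)"
proof -
  have "gform F x y (conn F x y b W) Z
      = (\<Sum>k\<in>UNIV. \<Sum>j\<in>UNIV. \<Sum>i\<in>UNIV. W $ i * Z $ j * (gF F k j x y *
          ((\<Sum>m\<in>UNIV. Gam F k i m x y * y $ m) + (\<Sum>r\<in>UNIV. Cup F k i r x y * b $ r))))"
    unfolding gform_def conn_def by (simp add: sum_distrib_left sum_distrib_right mult_ac)
  also have "\<dots> = (\<Sum>i\<in>UNIV. \<Sum>j\<in>UNIV. \<Sum>k\<in>UNIV. W $ i * Z $ j * (gF F k j x y *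
          ((\<Sum>m\<in>UNIV. Gam F k i m x y * y $ m) + (\<Sum>r\<in>UNIV. Cup F k i r x y * b $ r))))"
    by (subst sum.swap, subst (2) sum.swap, subst sum.swap) simp
  finally show ?thesis unfolding conn_low_def by (simp add: sum_distrib_left)
qed

lemma sum_contract_swap:
  fixes a :: "'a \<Rightarrow> real" and c :: "'b \<Rightarrow> real" and B :: "'a \<Rightarrow> 'b \<Rightarrow> real"
  shows "(\<Sum>j\<in>J. a j * (\<Sum>m\<in>M. B j m * c m)) = (\<Sum>m\<in>M. c m * (\<Sum>j\<in>J. a j * B j m))"
  unfolding sum_distrib_left by (subst sum.swap) (simp add: mult_ac)

context finsler
begin

lemma gform_sym: "(x, y) \<in> TU0 \<Longrightarrow> gform F x y V W = gform F x y W V"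
  unfolding gform_def by (subst sum.swap) (simp add: g_sym mult_ac)

lemma g_ginv_contract:
  assumes xy: "(x, y) \<in> TU0"
  shows "(\<Sum>k\<in>UNIV. gF F k j x y * (\<Sum>l\<in>UNIV. ginv F k l x y * c l)) = c j"
proof -
  have "(\<Sum>k\<in>UNIV. gF F k j x y * (\<Sum>l\<in>UNIV. ginv F k l x y * c l))
      = (\<Sum>k\<in>UNIV. \<Sum>l\<in>UNIV. gF F j k x y * ginv F k l x y * c l)"
    by (simp add: g_sym[OF xy, of _ j] sum_distrib_left mult.assoc)
  also have "\<dots> = (\<Sum>l\<in>UNIV. (\<Sum>k\<in>UNIV. gF F j k x y * ginv F k l x y) * c l)"
    by (subst sum.swap) (simp add: sum_distrib_right)
  also have "\<dots> = c j"
    by (simp add: g_ginv[OF xy] if_distrib[of "\<lambda>a. a * _"] cong: if_cong)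
  finally show ?thesis .
qed

lemma conn_low_sym:
  assumes xy: "(x, y) \<in> TU0"
  shows "conn_low F x y b i j + conn_low F x y b j i
    = (\<Sum>m\<in>UNIV. delta F m (gF F i j) x y * y $ m) + (\<Sum>r\<in>UNIV. dY r (gF F i j) x y * b $ r)"
proof -
  have Gam_low: "(\<Sum>k\<in>UNIV. gF F k j x y * Gam F k i m x y)
      = 1/2 * (delta F i (gF F m j) x y + delta F m (gF F i j) x y - delta F j (gF F i m) x y)"
    for i j m
  proof -
    have "(\<Sum>k\<in>UNIV. gF F k j x y * Gam F k i m x y) = (\<Sum>k\<in>UNIV. 1/2 * (gF F k j x y *
        (\<Sum>l\<in>UNIV. ginv F k l x y *
          (delta F i (gF F m l) x y + delta F m (gF F i l) x y - delta F l (gF F i m) x y))))"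
      unfolding Gam_def by (intro sum.cong refl) (rule mult.left_commute)
    then show ?thesis by (simp only: sum_distrib_left[symmetric] g_ginv_contract[OF xy])
  qed
  have Cup_low: "(\<Sum>k\<in>UNIV. gF F k j x y * Cup F k i r x y) = 1/2 * dY r (gF F j i) x y" for i j r
    unfolding Cup_def by (simp only: g_ginv_contract[OF xy]) (simp add: Clow_def)
  have low: "conn_low F x y b i j = (\<Sum>m\<in>UNIV. (\<Sum>k\<in>UNIV. gF F k j x y * Gam F k i m x y) * y $ m)
      + (\<Sum>r\<in>UNIV. (\<Sum>k\<in>UNIV. gF F k j x y * Cup F k i r x y) * b $ r)" for i j
    unfolding conn_low_def distrib_left sum.distrib sum_distrib_left sum_distrib_right
    by (subst (1 2) sum.swap) (simp add: mult_ac)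
  show ?thesis
    unfolding low Gam_low Cup_low
    using delta_g_sym[OF xy] dY_g_sym[OF xy]
    by (simp add: sum.distrib[symmetric] algebra_simps)
qed

lemma y_contract_conn_low_sym:
  assumes xy: "(x, y) \<in> TU0"
  shows "(\<Sum>j\<in>UNIV. y $ j * (conn_low F x y b i j + conn_low F x y b j i))
    = (\<Sum>j\<in>UNIV. y $ j * (\<Sum>m\<in>UNIV. dX m (gF F i j) x y * y $ m))"
proof -
  have dY0: "(\<Sum>j\<in>UNIV. y $ j * dY r (gF F i j) x y) = 0" for r
    using dY_g_contract_y[OF xy, of r i] dY_g_sym[OF xy] by simp
  have "(\<Sum>j\<in>UNIV. y $ j * delta F m (gF F i j) x y) = (\<Sum>j\<in>UNIV. y $ j * dX m (gF F i j) x y)" for m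
    using sum_contract_swap[of "\<lambda>j. y $ j" "\<lambda>j r. dY r (gF F i j) x y" "\<lambda>r. Gn F r m x y"] dY0
    unfolding delta_def right_diff_distrib sum_subtractf by (simp add: mult.commute)
  then show ?thesis
    unfolding conn_low_sym[OF xy] distrib_left sum.distrib sum_contract_swap
    by (simp add: dY0)
qed

lemma gform_conn_velocity:
  assumes xy: "(x, y) \<in> TU0"
  shows "gform F x y (conn F x y b W) y + gform F x y W (conn F x y b y)
    = (\<Sum>i\<in>UNIV. \<Sum>j\<in>UNIV. (\<Sum>m\<in>UNIV. dX m (gF F i j) x y * y $ m) * W $ i * y $ j)"
proof -
  have "gform F x y W (conn F x y b y) = (\<Sum>i\<in>UNIV. \<Sum>j\<in>UNIV. W $ i * y $ j * conn_low F x y b j i)"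
    unfolding gform_sym[OF xy, of W] gform_conn_left by (subst sum.swap) (simp add: mult_ac)
  then have "gform F x y (conn F x y b W) y + gform F x y W (conn F x y b y)
      = (\<Sum>i\<in>UNIV. W $ i * (\<Sum>j\<in>UNIV. y $ j * (conn_low F x y b i j + conn_low F x y b j i)))"
    unfolding gform_conn_left by (simp add: sum.distrib[symmetric] sum_distrib_left algebra_simps)
  also have "\<dots> = (\<Sum>i\<in>UNIV. \<Sum>j\<in>UNIV. (\<Sum>m\<in>UNIV. dX m (gF F i j) x y * y $ m) * W $ i * y $ j)"
    unfolding y_contract_conn_low_sym[OF xy] by (simp add: sum_distrib_left mult_ac)
  finally show ?thesis .
qed

end

lemma has_real_derivative_vec_nth:
  fixes W :: "real \<Rightarrow> real^'n::finite"
  assumes "(W has_vector_derivative W') (at s)"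
  shows "((\<lambda>t. W t $ k) has_real_derivative W' $ k) (at s)"
proof -
  have "((\<lambda>t. W t $ k) has_derivative (\<lambda>h. (h *\<^sub>R W') $ k)) (at s)"
    using has_derivative_compose[OF assms[unfolded has_vector_derivative_def]
        bounded_linear_imp_has_derivative[OF bounded_linear_vec_nth[of k]]] by simp
  then show ?thesis unfolding has_field_derivative_def
    by (rule has_derivative_eq_rhs) (auto simp: fun_eq_iff)
qed

lemma vd_eqI: "(f has_real_derivative D) (at s) \<Longrightarrow> vd f s = D"
  unfolding vd_def by (rule vector_derivative_at) (simp add: has_real_derivative_iff_has_vector_derivative)

lemma smooth_curve_has_vector_derivative:
  assumes "smooth_curve I c" "s \<in> I"
  shows "((vd ^^ k) c has_vector_derivative (vd ^^ Suc k) c s) (at s)"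
  using assms unfolding smooth_curve_def by (simp add: vd_def vector_derivative_works)

lemma has_real_derivative_const_on_open:
  assumes "(f has_real_derivative D) (at s)" "open I" "s \<in> I" "\<forall>t\<in>I. f t = c"
  shows "D = 0"
  using DERIV_unique[OF assms(1) has_field_derivative_transform_within_open[OF DERIV_const assms(2,3)]]
    assms(4) by simp

context finsler
begin

lemma gform_curve_has_real_derivative:
  assumes xy: "(\<gamma> s, vd \<gamma> s) \<in> TU0"
    and d\<gamma>: "(\<gamma> has_vector_derivative vd \<gamma> s) (at s)"
    and dT: "(vd \<gamma> has_vector_derivative vd (vd \<gamma>) s) (at s)"
    and dW: "\<And>i. ((\<lambda>t. W t $ i) has_real_derivative W' $ i) (at s)"
  shows "((\<lambda>t. gform F (\<gamma> t) (vd \<gamma> t) (W t) (vd \<gamma> t)) has_real_derivative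
     (\<Sum>i\<in>UNIV. \<Sum>j\<in>UNIV. (\<Sum>m\<in>UNIV. dX m (gF F i j) (\<gamma> s) (vd \<gamma> s) * vd \<gamma> s $ m) * W s $ i * vd \<gamma> s $ j)
     + gform F (\<gamma> s) (vd \<gamma> s) W' (vd \<gamma> s) + gform F (\<gamma> s) (vd \<gamma> s) (W s) (vd (vd \<gamma>) s)) (at s)"
proof -
  let ?x = "\<gamma> s" and ?y = "vd \<gamma> s" and ?a = "vd (vd \<gamma>) s"
  define gX where "gX i j = (\<Sum>m\<in>UNIV. dX m (gF F i j) ?x ?y * ?y $ m)" for i j
  define gY where "gY i j = (\<Sum>m\<in>UNIV. dY m (gF F i j) ?x ?y * ?a $ m)" for i j
  have "((\<lambda>t. gF F i j (\<gamma> t) (vd \<gamma> t) * W t $ i * vd \<gamma> t $ j) has_real_derivative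
      (gX i j + gY i j) * W s $ i * ?y $ j + gF F i j ?x ?y * W' $ i * ?y $ j
        + gF F i j ?x ?y * W s $ i * ?a $ j) (at s)" for i j
    using DERIV_mult'[OF DERIV_mult'[OF smooth_on2_has_real_derivative_curve[OF smooth_g xy d\<gamma> dT] dW]
        has_real_derivative_vec_nth[OF dT]]
    by (rule DERIV_cong) (simp add: gX_def gY_def algebra_simps)
  then have "((\<lambda>t. gform F (\<gamma> t) (vd \<gamma> t) (W t) (vd \<gamma> t)) has_real_derivative
      (\<Sum>i\<in>UNIV. \<Sum>j\<in>UNIV. gX i j * W s $ i * ?y $ j) + (\<Sum>i\<in>UNIV. W s $ i * (\<Sum>j\<in>UNIV. ?y $ j * gY i j))
      + gform F ?x ?y W' ?y + gform F ?x ?y (W s) ?a) (at s)"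
    unfolding gform_def
    by (rule DERIV_cong[OF DERIV_sum[OF DERIV_sum]])
      (simp add: sum.distrib sum_distrib_left algebra_simps)
  \<comment> \<open>The vertical variation of \<open>g\<close> is a Cartan tensor term and dies against \<open>\<gamma>'\<close>.\<close>
  moreover have "(\<Sum>j\<in>UNIV. ?y $ j * gY i j) = 0" for i
  proof -
    have "(\<Sum>j\<in>UNIV. ?y $ j * dY m (gF F i j) ?x ?y) = 0" for m
      using dY_g_contract_y[OF xy, of m i] dY_g_sym[OF xy] by simp
    then show ?thesis unfolding gY_def sum_contract_swap by simp
  qed
  ultimately show ?thesis unfolding gX_def by simp
qed

lemma gform_velocity_has_real_derivative:
  assumes xy: "(\<gamma> s, vd \<gamma> s) \<in> TU0"
    and d\<gamma>: "(\<gamma> has_vector_derivative vd \<gamma> s) (at s)"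
    and dT: "(vd \<gamma> has_vector_derivative vd (vd \<gamma>) s) (at s)"
    and dW: "\<And>i. ((\<lambda>t. W t $ i) has_real_derivative W' $ i) (at s)"
  shows "((\<lambda>t. gform F (\<gamma> t) (vd \<gamma> t) (W t) (vd \<gamma> t)) has_real_derivative
     gform F (\<gamma> s) (vd \<gamma> s) (covD F \<gamma> W s) (vd \<gamma> s)
     + gform F (\<gamma> s) (vd \<gamma> s) (W s) (covD F \<gamma> (vd \<gamma>) s)) (at s)"
proof -
  let ?x = "\<gamma> s" and ?y = "vd \<gamma> s" and ?a = "vd (vd \<gamma>) s"
  define b where "b = (\<chi> r. ?a $ r + 2 * Gs F r ?x ?y)"
  have "covD F \<gamma> W s = W' + conn F ?x ?y b (W s)"
    unfolding covD_eq_conn b_def using vd_eqI[OF dW] by (simp add: vec_eq_iff)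
  moreover have "covD F \<gamma> (vd \<gamma>) s = ?a + conn F ?x ?y b ?y"
    unfolding covD_eq_conn b_def using vd_eqI[OF has_real_derivative_vec_nth[OF dT]]
    by (simp add: vec_eq_iff)
  ultimately show ?thesis
    using gform_curve_has_real_derivative[OF assms] gform_conn_velocity[OF xy, of b "W s"]
    by (simp add: gform_add_left gform_add_right algebra_simps)
qed

context
  fixes I :: "real set" and \<gamma> :: "real \<Rightarrow> real^'n"
  assumes smooth: "smooth_curve I \<gamma>" and in_U: "\<gamma> ` I \<subseteq> U"
    and unit_speed: "\<forall>s\<in>I. F (\<gamma> s) (vd \<gamma> s) = 1"
begin

lemma open_I: "open I"
  using smooth unfolding smooth_curve_def by simp

lemma velocity_in_TU0: "s \<in> I \<Longrightarrow> (\<gamma> s, vd \<gamma> s) \<in> TU0"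
proof -
  assume s: "s \<in> I"
  then have "\<gamma> s \<in> U" using in_U by auto
  moreover from this have "vd \<gamma> s \<noteq> 0" using F_zero unit_speed s by force
  ultimately show ?thesis by simp
qed

lemma gform_velocity_velocity: "s \<in> I \<Longrightarrow> gform F (\<gamma> s) (vd \<gamma> s) (vd \<gamma> s) (vd \<gamma> s) = 1"
  using gform_self[OF velocity_in_TU0] unit_speed by (simp add: Fsq_def)

lemma curve_has_vector_derivative:
  assumes "s \<in> I"
  shows "(\<gamma> has_vector_derivative vd \<gamma> s) (at s)"
    and "(vd \<gamma> has_vector_derivative vd (vd \<gamma>) s) (at s)"
    and "(vd (vd \<gamma>) has_vector_derivative vd (vd (vd \<gamma>)) s) (at s)"
  using smooth_curve_has_vector_derivative[OF smooth assms, of 0]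
    smooth_curve_has_vector_derivative[OF smooth assms, of 1]
    smooth_curve_has_vector_derivative[OF smooth assms, of 2]
  by (simp_all add: numeral_2_eq_2)

lemma gform_covD_velocity_velocity:
  assumes s: "s \<in> I"
  shows "gform F (\<gamma> s) (vd \<gamma> s) (covD F \<gamma> (vd \<gamma>) s) (vd \<gamma> s) = 0"
proof -
  have "gform F (\<gamma> s) (vd \<gamma> s) (covD F \<gamma> (vd \<gamma>) s) (vd \<gamma> s)
      + gform F (\<gamma> s) (vd \<gamma> s) (vd \<gamma> s) (covD F \<gamma> (vd \<gamma>) s) = 0"
    using gform_velocity_has_real_derivative[OF velocity_in_TU0[OF s]
        curve_has_vector_derivative(1,2)[OF s]
        has_real_derivative_vec_nth[OF curve_has_vector_derivative(2)[OF s]]]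
    by (rule has_real_derivative_const_on_open[OF _ open_I s]) (use gform_velocity_velocity in blast)
  then show ?thesis using gform_sym[OF velocity_in_TU0[OF s]] by simp
qed

lemma covD_velocity_differentiable:
  assumes s: "s \<in> I"
  shows "((\<lambda>t. covD F \<gamma> (vd \<gamma>) t $ k) has_real_derivative
    (\<chi> i. vd (\<lambda>t. covD F \<gamma> (vd \<gamma>) t $ i) s) $ k) (at s)"
proof -
  have along: "(\<lambda>t. h (\<gamma> t) (vd \<gamma> t)) differentiable (at s)" if "smooth_on2 TU0 h" for h
    using smooth_on2_has_real_derivative_curve[OF that velocity_in_TU0[OF s]
        curve_has_vector_derivative(1,2)[OF s]] real_differentiable_def by blast
  have coords: "(\<lambda>t. vd \<gamma> t $ i) differentiable (at s)" "(\<lambda>t. vd (vd \<gamma>) t $ i) differentiable (at s)" for i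
    using has_real_derivative_vec_nth[OF curve_has_vector_derivative(2)[OF s]]
      has_real_derivative_vec_nth[OF curve_has_vector_derivative(3)[OF s]]
      real_differentiable_def by blast+
  define E where "E t = vd (vd \<gamma>) t $ k + (\<Sum>i\<in>UNIV. vd \<gamma> t $ i *
        ((\<Sum>j\<in>UNIV. Gam F k i j (\<gamma> t) (vd \<gamma> t) * vd \<gamma> t $ j) +
         (\<Sum>r\<in>UNIV. Cup F k i r (\<gamma> t) (vd \<gamma> t) * (vd (vd \<gamma>) t $ r + 2 * Gs F r (\<gamma> t) (vd \<gamma> t)))))"
    for t
  have "E differentiable (at s)"
    unfolding E_def[abs_def] using coords
    by (intro differentiable_add differentiable_sum differentiable_mult differentiable_const
        smooth_on2_vec_nth[OF open_TU0] along smooth_Gam smooth_Cup smooth_Gs allI ballI) simp_all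
  then obtain D where "(E has_real_derivative D) (at s)"
    using real_differentiable_def by blast
  moreover have "E t = covD F \<gamma> (vd \<gamma>) t $ k" if "t \<in> I" for t
    unfolding covD_def E_def
    using vd_eqI[OF has_real_derivative_vec_nth[OF curve_has_vector_derivative(2)[OF that]]]
    by simp
  ultimately have "((\<lambda>t. covD F \<gamma> (vd \<gamma>) t $ k) has_real_derivative D) (at s)"
    by (rule has_field_derivative_transform_within_open[OF _ open_I s])
  then show ?thesis using vd_eqI by simp
qed

lemma gform_covD2_velocity:
  assumes s: "s \<in> I"
  shows "gform F (\<gamma> s) (vd \<gamma> s) (covD F \<gamma> (covD F \<gamma> (vd \<gamma>)) s) (vd \<gamma> s)
     + gform F (\<gamma> s) (vd \<gamma> s) (covD F \<gamma> (vd \<gamma>) s) (covD F \<gamma> (vd \<gamma>) s) = 0"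
  using gform_velocity_has_real_derivative[OF velocity_in_TU0[OF s]
      curve_has_vector_derivative(1,2)[OF s] covD_velocity_differentiable[OF s]]
  by (rule has_real_derivative_const_on_open[OF _ open_I s]) (use gform_covD_velocity_velocity in blast)

end

end

theorem proposition3p1:
  fixes U :: "(real^'n::finite) set" and F :: "'n fin"
    and I :: "real set" and \<gamma> :: "real \<Rightarrow> real^'n" and \<tau> :: "real \<Rightarrow> real"
  assumes "finsler_chart U F"
    and "smooth_curve I \<gamma>" and "\<gamma> ` I \<subseteq> U"
    and "\<forall>s\<in>I. F (\<gamma> s) (vd \<gamma> s) = 1"
    and "\<forall>k. \<forall>s\<in>I. (deriv ^^ k) \<tau> differentiable (at s)"
    and "\<forall>s\<in>I. covD F \<gamma> (covD F \<gamma> (vd \<gamma>)) s + \<tau> s *\<^sub>R vd \<gamma> s = 0"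
  shows "\<forall>s\<in>I. \<tau> s = gform F (\<gamma> s) (vd \<gamma> s) (covD F \<gamma> (vd \<gamma>) s) (covD F \<gamma> (vd \<gamma>) s)"
proof
  fix s assume s: "s \<in> I"
  interpret finsler U F by unfold_locales (rule assms(1))
  have "covD F \<gamma> (covD F \<gamma> (vd \<gamma>)) s = (- \<tau> s) *\<^sub>R vd \<gamma> s"
    using assms(6) s by (simp add: eq_neg_iff_add_eq_0[symmetric])
  then have "gform F (\<gamma> s) (vd \<gamma> s) (covD F \<gamma> (covD F \<gamma> (vd \<gamma>)) s) (vd \<gamma> s) = - \<tau> s"
    using gform_velocity_velocity[OF assms(2-4) s] by (simp add: gform_uminus_left gform_scaleR_left)
  with gform_covD2_velocity[OF assms(2-4) s]
  show "\<tau> s = gform F (\<gamma> s) (vd \<gamma> s) (covD F \<gamma> (vd \<gamma>) s) (covD F \<gamma> (vd \<gamma>) s)" by simp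
qed

end
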